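(* Consider the Hubbard model on a finite set $\Lambda$ of $N_s\ge2$ sites with real symmetric hopping matrix satisfying $t_{x,y}\ge0$ for all $x,y\in\Lambda$, electron number $N_e=N_s-1$, and $U=\infty$. Then among the ground states there are states with total spin $S_{\rm tot}=S_{\max}=N_e/2$ (hence a $(2S_{\max}+1)$-dimensional space of ground states with $S_{\rm tot}=S_{\max}$).
   Context: Let $\Lambda$ be a finite set of $N_s$ sites. For $x\in\Lambda$, $\sigma\in\{\uparrow,\downarrow\}$, $c_{x,\sigma}$ are fermion annihilation operators with $\{c^\dagger_{x,\sigma},c_{y,\tau}\}=\delta_{x,y}\delta_{\sigma,\tau}$, $\{c_{x,\sigma},c_{y,\tau}\}=\{c^\dagger_{x,\sigma},c^\dagger_{y,\tau}\}=0$, vacuum $\Phi_{\rm vac}$ with $c_{x,\sigma}\Phi_{\rm vac}=0$; $\mathcal H_{N_e}$ is the span of $c^\dagger_{x_1,\sigma_1}\cdots c^\dagger_{x_{N_e},\sigma_{N_e}}\Phi_{\rm vac}$. $n_{x,\sigma}=c^\dagger_{x,\sigma}c_{x,\sigma}$. For a real symmetric $T=(t_{x,y})$, $H_{\rm hop}=\sum_{x,y\in\Lambda}\sum_\sigma t_{x,y}c^\dagger_{x,\sigma}c_{y,\sigma}$. The model with $U=\infty$: let $P_0=\prod_{x\in\Lambda}(1-n_{x,\uparrow}n_{x,\downarrow})$ be the orthogonal projection onto states with no doubly occupied site; the $U=\infty$ Hubbard model is the operator $P_0H_{\rm hop}P_0$ restricted to $P_0\mathcal H_{N_e}$, and its ground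 states are its eigenvectors in $P_0\mathcal H_{N_e}$ with the lowest eigenvalue. Total spin operators $S^{(\alpha)}_{\rm tot}=\frac12\sum_x\sum_{\sigma,\tau}c^\dagger_{x,\sigma}(p^{(\alpha)})_{\sigma,\tau}c_{x,\tau}$ (Pauli matrices $p^{(\alpha)}$) commute with this operator; a state has total spin $S_{\rm tot}$ if $\sum_\alpha (S^{(\alpha)}_{\rm tot})^2$ acts on it as $S_{\rm tot}(S_{\rm tot}+1)$. $S_{\max}=N_e/2$ for $N_e\le N_s$. *)

theory Defs
  imports Complex_Main "HOL-Library.Product_Lexorder"
begin

text \<open>Fermionic Fock space over modes (x, sigma), x a site, sigma :: bool
  (True = spin up, False = spin down). Modes are ordered lexicographically.
  A state is a coefficient function on occupation sets of modes; the basis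
  vector for the set {m1 < ... < mk} is c+_{m1} ... c+_{mk} Phi_vac.\<close>

type_synonym 'a mode = "'a \<times> bool"
type_synonym 'a fstate = "'a mode set \<Rightarrow> complex"

definition fsign :: "'a::linorder mode \<Rightarrow> 'a mode set \<Rightarrow> complex" where
  "fsign m S = (-1) ^ card {m' \<in> S. m' < m}"

definition cdag :: "'a::linorder mode \<Rightarrow> 'a fstate \<Rightarrow> 'a fstate" where
  "cdag m \<psi> = (\<lambda>S. if m \<in> S then fsign m S * \<psi> (S - {m}) else 0)"

definition cop :: "'a::linorder mode \<Rightarrow> 'a fstate \<Rightarrow> 'a fstate" where
  "cop m \<psi> = (\<lambda>S. if m \<notin> S then fsign m S * \<psi> (insert m S) else 0)"

definition Hhop :: "'a::linorder set \<Rightarrow> ('a \<Rightarrow> 'a \<Rightarrow> real) \<Rightarrow> 'a fstate \<Rightarrow> 'a fstate" where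
  "Hhop \<Lambda> t \<psi> = (\<lambda>S. \<Sum>x\<in>\<Lambda>. \<Sum>y\<in>\<Lambda>. \<Sum>\<sigma>\<in>(UNIV::bool set).
      complex_of_real (t x y) * cdag (x,\<sigma>) (cop (y,\<sigma>) \<psi>) S)"

definition no_double :: "'a mode set \<Rightarrow> bool" where
  "no_double S = (\<forall>x. \<not> ((x,True) \<in> S \<and> (x,False) \<in> S))"

definition P0 :: "'a fstate \<Rightarrow> 'a fstate" where
  "P0 \<psi> = (\<lambda>S. if no_double S then \<psi> S else 0)"

definition Hinf :: "'a::linorder set \<Rightarrow> ('a \<Rightarrow> 'a \<Rightarrow> real) \<Rightarrow> 'a fstate \<Rightarrow> 'a fstate" where
  "Hinf \<Lambda> t \<psi> = P0 (Hhop \<Lambda> t (P0 \<psi>))"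

definition HNe :: "'a set \<Rightarrow> nat \<Rightarrow> 'a fstate set" where
  "HNe \<Lambda> Ne = {\<psi>. \<forall>S. \<psi> S \<noteq> 0 \<longrightarrow> S \<subseteq> \<Lambda> \<times> UNIV \<and> finite S \<and> card S = Ne}"

definition P0HNe :: "'a set \<Rightarrow> nat \<Rightarrow> 'a fstate set" where
  "P0HNe \<Lambda> Ne = P0 ` HNe \<Lambda> Ne"

definition ground_state :: "'a::linorder set \<Rightarrow> ('a \<Rightarrow> 'a \<Rightarrow> real) \<Rightarrow> nat \<Rightarrow> 'a fstate \<Rightarrow> bool" where
  "ground_state \<Lambda> t Ne \<psi> \<longleftrightarrow>
     \<psi> \<in> P0HNe \<Lambda> Ne \<and> \<psi> \<noteq> (\<lambda>_. 0) \<and>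
     (\<exists>E::real. Hinf \<Lambda> t \<psi> = (\<lambda>S. complex_of_real E * \<psi> S) \<and>
        (\<forall>\<phi> \<in> P0HNe \<Lambda> Ne. \<forall>E'::complex. \<phi> \<noteq> (\<lambda>_. 0) \<longrightarrow>
            Hinf \<Lambda> t \<phi> = (\<lambda>S. E' * \<phi> S) \<longrightarrow> E \<le> Re E'))"

text \<open>Pauli matrices p^(alpha), alpha \<in> {1,2,3}; spin index True = up = first row/column\<close>
definition pauli :: "nat \<Rightarrow> bool \<Rightarrow> bool \<Rightarrow> complex" where
  "pauli \<alpha> \<sigma> \<tau> =
     (if \<alpha> = 1 then (if \<sigma> \<noteq> \<tau> then 1 else 0)
      else if \<alpha> = 2 then (if \<sigma> = \<tau> then 0 else if \<sigma> then - \<i> else \<i>)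
      else (if \<sigma> \<noteq> \<tau> then 0 else if \<sigma> then 1 else -1))"

definition Stot :: "'a::linorder set \<Rightarrow> nat \<Rightarrow> 'a fstate \<Rightarrow> 'a fstate" where
  "Stot \<Lambda> \<alpha> \<psi> = (\<lambda>S. (1/2) * (\<Sum>x\<in>\<Lambda>. \<Sum>\<sigma>\<in>(UNIV::bool set). \<Sum>\<tau>\<in>(UNIV::bool set).
      pauli \<alpha> \<sigma> \<tau> * cdag (x,\<sigma>) (cop (x,\<tau>) \<psi>) S))"

definition Stot_sq :: "'a::linorder set \<Rightarrow> 'a fstate \<Rightarrow> 'a fstate" where
  "Stot_sq \<Lambda> \<psi> = (\<lambda>S. \<Sum>\<alpha>\<in>{1,2,3}. Stot \<Lambda> \<alpha> (Stot \<Lambda> \<alpha> \<psi>) S)"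

definition has_total_spin :: "'a::linorder set \<Rightarrow> real \<Rightarrow> 'a fstate \<Rightarrow> bool" where
  "has_total_spin \<Lambda> s \<psi> \<longleftrightarrow> Stot_sq \<Lambda> \<psi> = (\<lambda>S. complex_of_real (s * (s + 1)) * \<psi> S)"

end

(* With N_s - 1 electrons and no double occupancy, every basis state consists of one hole
   at a site h and a spin configuration on the remaining sites; a hop moves the hole and
   carries the hopping electron's spin along.  On fully polarized states, suitably signed,
   the Hamiltonian acts exactly as the one-hole matrix M with diagonal sum_{z /= h} t_zz and
   off-diagonal entries -t, so a lowest eigenvector of M yields a polarized eigenstate of
   total spin N_e/2 with the lowest eigenvalue mu of M.  Conversely, for any eigenstate phi
   with eigenvalue E, the hole weights f(h) = sum_D |phi(h, D)| satisfy M f <= (Re E) f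
   componentwise, by the triangle inequality and t >= 0; the Rayleigh characterisation of mu
   then gives mu <= Re E. *)

theory Submission
  imports Defs "HOL-Analysis.Function_Topology"
begin

section \<open>The lowest eigenvalue of a real symmetric matrix\<close>

definition quadratic_form :: "'a set \<Rightarrow> ('a \<Rightarrow> 'a \<Rightarrow> real) \<Rightarrow> ('a \<Rightarrow> real) \<Rightarrow> real" where
  "quadratic_form \<Lambda> M f = (\<Sum>x\<in>\<Lambda>. f x * (\<Sum>y\<in>\<Lambda>. M x y * f y))"

lemma quadratic_form_double_sum:
  "quadratic_form \<Lambda> M f = (\<Sum>x\<in>\<Lambda>. \<Sum>y\<in>\<Lambda>. f x * M x y * f y)"
  unfolding quadratic_form_def by (simp add: sum_distrib_left mult.assoc)

lemma continuous_on_quadratic_form: "continuous_on A (quadratic_form \<Lambda> M)"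
  unfolding quadratic_form_def
  by (intro continuous_intros continuous_on_product_then_coordinatewise continuous_on_id)

lemma quadratic_form_scale: "quadratic_form \<Lambda> M (\<lambda>x. c * f x) = c\<^sup>2 * quadratic_form \<Lambda> M f"
  unfolding quadratic_form_double_sum by (simp add: sum_distrib_left power2_eq_square algebra_simps)

lemma compact_unit_sphere_on:
  assumes "finite \<Lambda>"
  shows "compact {u :: 'a \<Rightarrow> real. (\<forall>x. x \<notin> \<Lambda> \<longrightarrow> u x = 0) \<and> (\<Sum>x\<in>\<Lambda>. (u x)\<^sup>2) = 1}"
    (is "compact ?K")
proof -
  define B where "B = Pi\<^sub>E UNIV (\<lambda>x. if x \<in> \<Lambda> then {-1..1} else {0::real})"
  have "\<forall>x. compact (if x \<in> \<Lambda> then {-1..1} else {0::real})" by simp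
  then have "compact B"
    using compactin_PiE[of "\<lambda>_. euclidean" UNIV "\<lambda>x. if x \<in> \<Lambda> then {-1..1} else {0::real}"]
    unfolding B_def by (simp add: euclidean_product_topology)
  moreover have "closed ?K"
    by (intro closed_Collect_conj closed_Collect_all closed_Collect_imp closed_Collect_eq continuous_intros) auto
  moreover have "?K \<subseteq> B"
  proof
    fix u assume u: "u \<in> ?K"
    have "\<bar>u x\<bar> \<le> 1" if "x \<in> \<Lambda>" for x
    proof -
      have "(u x)\<^sup>2 \<le> (\<Sum>x\<in>\<Lambda>. (u x)\<^sup>2)"
        using assms that by (intro member_le_sum) auto
      then show ?thesis using u by (simp add: abs_square_le_1)
    qed
    then show "u \<in> B" using u by (auto simp: B_def PiE_iff abs_le_iff)
  qed
  ultimately show ?thesis using compact_Int_closed[of B ?K] by (simp add: Int_absorb1)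
qed

lemma quadratic_form_attains_min_on_unit_sphere:
  assumes "finite \<Lambda>" and "\<Lambda> \<noteq> {}"
  obtains g where "(\<Sum>x\<in>\<Lambda>. (g x)\<^sup>2) = 1"
    and "\<And>f. (\<Sum>x\<in>\<Lambda>. (f x)\<^sup>2) = 1 \<Longrightarrow> quadratic_form \<Lambda> M g \<le> quadratic_form \<Lambda> M f"
proof -
  define K where "K = {u :: 'a \<Rightarrow> real. (\<forall>x. x \<notin> \<Lambda> \<longrightarrow> u x = 0) \<and> (\<Sum>x\<in>\<Lambda>. (u x)\<^sup>2) = 1}"
  obtain h where "h \<in> \<Lambda>" using assms(2) by blast
  then have "(\<lambda>x. if x = h then 1 else 0) \<in> K"
    using assms(1) by (simp add: K_def if_distrib[of "\<lambda>z. z\<^sup>2"] cong: if_cong)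
  moreover have "compact K" unfolding K_def using compact_unit_sphere_on[OF assms(1)] .
  ultimately obtain g where g: "g \<in> K" and min: "\<forall>u\<in>K. quadratic_form \<Lambda> M g \<le> quadratic_form \<Lambda> M u"
    using continuous_attains_inf[of K "quadratic_form \<Lambda> M"] continuous_on_quadratic_form by blast
  show thesis
  proof (rule that)
    show "(\<Sum>x\<in>\<Lambda>. (g x)\<^sup>2) = 1" using g by (simp add: K_def)
    fix f :: "'a \<Rightarrow> real" assume f: "(\<Sum>x\<in>\<Lambda>. (f x)\<^sup>2) = 1"
    \<comment> \<open>Both the form and the constraint only see the values on \<open>\<Lambda>\<close>.\<close>
    define f' where "f' x = (if x \<in> \<Lambda> then f x else 0)" for x
    have "f' \<in> K" using f by (simp add: K_def f'_def)
    moreover have "quadratic_form \<Lambda> M f' = quadratic_form \<Lambda> M f"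
      unfolding quadratic_form_def f'_def by (intro sum.cong refl) auto
    ultimately show "quadratic_form \<Lambda> M g \<le> quadratic_form \<Lambda> M f" using min by metis
  qed
qed

lemma linear_coeff_zero_if_quadratic_nonneg:
  fixes a c :: real
  assumes "\<And>s. 0 \<le> s * a + s\<^sup>2 * c"
  shows "a = 0"
proof (rule ccontr)
  assume "a \<noteq> 0"
  define C where "C = \<bar>c\<bar> + 1"
  define s where "s = - a / (2 * C)"
  have "C > 0" by (simp add: C_def)
  have "s * a + s\<^sup>2 * c \<le> s * a + s\<^sup>2 * C"
    unfolding C_def by (intro add_left_mono mult_left_mono) auto
  also have "\<dots> = - a\<^sup>2 / (4 * C)"
    using \<open>C > 0\<close> by (simp add: s_def field_simps power2_eq_square)
  also have "\<dots> < 0"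
    using \<open>C > 0\<close> \<open>a \<noteq> 0\<close> by (simp add: divide_neg_pos)
  finally show False using assms[of s] by simp
qed

lemma quadratic_form_shift_diagonal:
  assumes "finite \<Lambda>"
  shows "quadratic_form \<Lambda> (\<lambda>x y. M x y - (if x = y then \<mu> else 0)) f
    = quadratic_form \<Lambda> M f - \<mu> * (\<Sum>x\<in>\<Lambda>. (f x)\<^sup>2)"
  using assms unfolding quadratic_form_def
  by (simp add: left_diff_distrib sum_subtractf right_diff_distrib sum_distrib_left
      power2_eq_square if_distrib[of "\<lambda>z. z * _"] mult.left_commute cong: if_cong)

text \<open>Along the line \<open>g + s A g\<close> the form equals \<open>2 s |A g|\<^sup>2 + O(s\<^sup>2)\<close>, which is
  nonnegative only if \<open>A g = 0\<close>.\<close>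
lemma psd_quadratic_form_eq_0_imp_kernel:
  fixes A :: "'a \<Rightarrow> 'a \<Rightarrow> real"
  assumes fin: "finite \<Lambda>" and sym: "\<And>x y. x \<in> \<Lambda> \<Longrightarrow> y \<in> \<Lambda> \<Longrightarrow> A x y = A y x"
    and psd: "\<And>f. 0 \<le> quadratic_form \<Lambda> A f" and zero: "quadratic_form \<Lambda> A g = 0"
    and x: "x \<in> \<Lambda>"
  shows "(\<Sum>y\<in>\<Lambda>. A x y * g y) = 0"
proof -
  define h where "h x = (\<Sum>y\<in>\<Lambda>. A x y * g y)" for x
  define a where "a = (\<Sum>x\<in>\<Lambda>. (h x)\<^sup>2)"
  have hAg: "(\<Sum>x\<in>\<Lambda>. \<Sum>y\<in>\<Lambda>. h x * A x y * g y) = a"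
    unfolding a_def h_def by (simp add: sum_distrib_left mult.assoc power2_eq_square)
  have gAh: "(\<Sum>x\<in>\<Lambda>. \<Sum>y\<in>\<Lambda>. g x * A x y * h y) = a"
  proof -
    have "(\<Sum>x\<in>\<Lambda>. \<Sum>y\<in>\<Lambda>. g x * A x y * h y) = (\<Sum>y\<in>\<Lambda>. \<Sum>x\<in>\<Lambda>. h y * A y x * g x)"
      by (subst sum.swap) (intro sum.cong refl, simp add: sym)
    then show ?thesis using hAg by simp
  qed
  have "0 \<le> s * (2 * a) + s\<^sup>2 * quadratic_form \<Lambda> A h" for s
  proof -
    have "quadratic_form \<Lambda> A (\<lambda>x. g x + s * h x) = (\<Sum>x\<in>\<Lambda>. \<Sum>y\<in>\<Lambda>.
        g x * A x y * g y + s * (g x * A x y * h y) + s * (h x * A x y * g y) + s\<^sup>2 * (h x * A x y * h y))"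
      unfolding quadratic_form_double_sum
      by (intro sum.cong refl) (simp add: algebra_simps power2_eq_square)
    also have "\<dots> = quadratic_form \<Lambda> A g
        + s * (\<Sum>x\<in>\<Lambda>. \<Sum>y\<in>\<Lambda>. g x * A x y * h y) + s * (\<Sum>x\<in>\<Lambda>. \<Sum>y\<in>\<Lambda>. h x * A x y * g y)
        + s\<^sup>2 * quadratic_form \<Lambda> A h"
      unfolding quadratic_form_double_sum by (simp add: sum.distrib sum_distrib_left)
    finally have "quadratic_form \<Lambda> A (\<lambda>x. g x + s * h x) = s * (2 * a) + s\<^sup>2 * quadratic_form \<Lambda> A h"
      using zero gAh hAg by simp
    then show ?thesis using psd[of "\<lambda>x. g x + s * h x"] by simp
  qed
  then have "2 * a = 0" by (rule linear_coeff_zero_if_quadratic_nonneg)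
  then have "(h x)\<^sup>2 = 0"
    using fin x unfolding a_def by (simp add: sum_nonneg_eq_0_iff)
  then show ?thesis by (simp add: h_def)
qed

lemma symmetric_matrix_min_eigenvector:
  fixes M :: "'a \<Rightarrow> 'a \<Rightarrow> real"
  assumes fin: "finite \<Lambda>" and ne: "\<Lambda> \<noteq> {}"
    and sym: "\<And>x y. x \<in> \<Lambda> \<Longrightarrow> y \<in> \<Lambda> \<Longrightarrow> M x y = M y x"
  obtains \<mu> v where "\<exists>x\<in>\<Lambda>. v x \<noteq> 0"
    and "\<And>x. x \<in> \<Lambda> \<Longrightarrow> (\<Sum>y\<in>\<Lambda>. M x y * v y) = \<mu> * v x"
    and "\<And>f. \<mu> * (\<Sum>x\<in>\<Lambda>. (f x)\<^sup>2) \<le> quadratic_form \<Lambda> M f"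
proof -
  obtain g where g: "(\<Sum>x\<in>\<Lambda>. (g x)\<^sup>2) = 1"
    and min: "\<And>f. (\<Sum>x\<in>\<Lambda>. (f x)\<^sup>2) = 1 \<Longrightarrow> quadratic_form \<Lambda> M g \<le> quadratic_form \<Lambda> M f"
    using quadratic_form_attains_min_on_unit_sphere[OF fin ne] by metis
  define \<mu> where "\<mu> = quadratic_form \<Lambda> M g"
  have lower: "\<mu> * (\<Sum>x\<in>\<Lambda>. (f x)\<^sup>2) \<le> quadratic_form \<Lambda> M f" for f
  proof (cases "(\<Sum>x\<in>\<Lambda>. (f x)\<^sup>2) = 0")
    case True
    then have "\<forall>x\<in>\<Lambda>. f x = 0" using fin by (simp add: sum_nonneg_eq_0_iff)
    then show ?thesis using True by (simp add: quadratic_form_def)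
  next
    case False
    define c where "c = sqrt (\<Sum>x\<in>\<Lambda>. (f x)\<^sup>2)"
    have c: "c > 0" "c\<^sup>2 = (\<Sum>x\<in>\<Lambda>. (f x)\<^sup>2)"
      using False sum_nonneg[of \<Lambda> "\<lambda>x. (f x)\<^sup>2"] unfolding c_def by auto
    have "(\<Sum>x\<in>\<Lambda>. (f x / c)\<^sup>2) = 1"
      using c False by (simp add: power_divide flip: sum_divide_distrib)
    then have "\<mu> \<le> quadratic_form \<Lambda> M (\<lambda>x. (1 / c) * f x)"
      unfolding \<mu>_def by (intro min) simp
    then have "\<mu> \<le> quadratic_form \<Lambda> M f / c\<^sup>2"
      unfolding quadratic_form_scale by (simp add: power_divide)
    then show ?thesis using c(1) unfolding c(2)[symmetric] by (simp add: pos_le_divide_eq mult.commute)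
  qed
  have "(\<Sum>y\<in>\<Lambda>. (M x y - (if x = y then \<mu> else 0)) * g y) = 0" if "x \<in> \<Lambda>" for x
  proof (rule psd_quadratic_form_eq_0_imp_kernel[OF fin _ _ _ that])
    show "M x y - (if x = y then \<mu> else 0) = M y x - (if y = x then \<mu> else 0)"
      if "x \<in> \<Lambda>" "y \<in> \<Lambda>" for x y using sym that by auto
    show "0 \<le> quadratic_form \<Lambda> (\<lambda>x y. M x y - (if x = y then \<mu> else 0)) f" for f
      using lower[of f] by (simp add: quadratic_form_shift_diagonal fin)
    show "quadratic_form \<Lambda> (\<lambda>x y. M x y - (if x = y then \<mu> else 0)) g = 0"
      using g by (simp add: quadratic_form_shift_diagonal fin \<mu>_def)
  qed
  then have "(\<Sum>y\<in>\<Lambda>. M x y * g y) = \<mu> * g x" if "x \<in> \<Lambda>" for x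
    using fin that by (simp add: left_diff_distrib sum_subtractf if_distrib[of "\<lambda>z. z * _"] cong: if_cong)
  moreover have "\<exists>x\<in>\<Lambda>. g x \<noteq> 0"
  proof (rule ccontr)
    assume "\<not> (\<exists>x\<in>\<Lambda>. g x \<noteq> 0)"
    then have "(\<Sum>x\<in>\<Lambda>. (g x)\<^sup>2) = 0" by simp
    then show False using g by simp
  qed
  ultimately show thesis using that lower by blast
qed

section \<open>Configurations with a single hole\<close>

lemma sum_UNIV_bool: "(\<Sum>\<sigma>\<in>(UNIV::bool set). f \<sigma>) = f True + f False"
  by (simp add: UNIV_bool add.commute)

lemma fsign_cases: "fsign m S = 1 \<or> fsign m S = -1"
  unfolding fsign_def by (metis neg_one_even_power neg_one_odd_power)

lemma fsign_mult_self: "fsign m S * fsign m S = 1"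
  using fsign_cases[of m S] by auto

lemma norm_fsign: "norm (fsign m S) = 1"
  using fsign_cases[of m S] by auto

lemma fsign_Diff_self: "fsign m (S - {m}) = fsign m S"
proof -
  have "{m' \<in> S - {m}. m' < m} = {m' \<in> S. m' < m}" by auto
  then show ?thesis unfolding fsign_def by simp
qed

lemma fsign_insert_self: "fsign m (insert m S) = fsign m S"
  using fsign_Diff_self[of m "insert m S"] fsign_Diff_self[of m S] by simp

lemma cdag_cop:
  "cdag m (cop m' \<phi>) S = (if m \<in> S \<and> m' \<notin> S - {m}
     then fsign m S * fsign m' (S - {m}) * \<phi> (insert m' (S - {m})) else 0)"
  unfolding cdag_def cop_def by auto

lemma cdag_cop_self: "cdag m (cop m \<phi>) S = (if m \<in> S then \<phi> S else 0)"
  unfolding cdag_cop by (auto simp: fsign_Diff_self fsign_mult_self insert_absorb)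

lemma cdag_cop_scale: "cdag m (cop m' (\<lambda>S. c * \<phi> S)) S = c * cdag m (cop m' \<phi>) S"
  unfolding cdag_def cop_def by auto

text \<open>With \<open>N\<^sub>s - 1\<close> electrons and no double occupancy there is exactly one empty site, the
  hole \<open>h\<close>; every other site carries one electron, with spin down exactly on \<open>D\<close>.\<close>
definition hole_config :: "'a set \<Rightarrow> 'a \<Rightarrow> 'a set \<Rightarrow> 'a mode set" where
  "hole_config \<Lambda> h D = (\<lambda>y. (y, y \<notin> D)) ` (\<Lambda> - {h})"

text \<open>The electron at \<open>x\<close> hops into the hole \<open>h\<close> and takes its spin along.\<close>
definition move_spin :: "'a \<Rightarrow> 'a \<Rightarrow> 'a set \<Rightarrow> 'a set" where
  "move_spin x h D = (if x \<in> D then insert h (D - {x}) else D)"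

definition hop_sign :: "'a::linorder set \<Rightarrow> 'a \<Rightarrow> 'a \<Rightarrow> 'a set \<Rightarrow> complex" where
  "hop_sign \<Lambda> x h D =
     fsign (x, x \<notin> D) (hole_config \<Lambda> h D) * fsign (h, x \<notin> D) (hole_config \<Lambda> h D - {(x, x \<notin> D)})"

lemma mem_hole_config: "(z, \<sigma>) \<in> hole_config \<Lambda> h D \<longleftrightarrow> z \<in> \<Lambda> \<and> z \<noteq> h \<and> \<sigma> = (z \<notin> D)"
  unfolding hole_config_def by auto

lemma no_double_hole_config: "no_double (hole_config \<Lambda> h D)"
  unfolding no_double_def by (auto simp: mem_hole_config)

lemma P0_hole_config: "P0 \<phi> (hole_config \<Lambda> h D) = \<phi> (hole_config \<Lambda> h D)"
  by (simp add: P0_def no_double_hole_config)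

lemma card_hole_config:
  assumes "finite \<Lambda>" "h \<in> \<Lambda>"
  shows "card (hole_config \<Lambda> h D) = card \<Lambda> - 1"
proof -
  have "inj_on (\<lambda>y. (y, y \<notin> D)) (\<Lambda> - {h})" by (auto simp: inj_on_def)
  then show ?thesis using assms by (simp add: hole_config_def card_image)
qed

lemma hole_config_inj:
  assumes "h \<in> \<Lambda>" "D \<subseteq> \<Lambda> - {h}" "D' \<subseteq> \<Lambda> - {h'}"
    and eq: "hole_config \<Lambda> h D = hole_config \<Lambda> h' D'"
  shows "h = h' \<and> D = D'"
proof
  show "h = h'"
  proof (rule ccontr)
    assume "h \<noteq> h'"
    then have "(h, h \<notin> D') \<in> hole_config \<Lambda> h' D'" using assms by (simp add: mem_hole_config)
    then show False unfolding eq[symmetric] by (simp add: mem_hole_config)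
  qed
  have "y \<in> D \<longleftrightarrow> (y, False) \<in> hole_config \<Lambda> h D" for y
    using assms(2) by (auto simp: mem_hole_config)
  moreover have "y \<in> D' \<longleftrightarrow> (y, False) \<in> hole_config \<Lambda> h' D'" for y
    using assms(3) by (auto simp: mem_hole_config)
  ultimately show "D = D'" using eq by blast
qed

lemma hop_hole_config:
  assumes "x \<in> \<Lambda>" "x \<noteq> h" "h \<in> \<Lambda>" "D \<subseteq> \<Lambda> - {h}"
  shows "insert (h, x \<notin> D) (hole_config \<Lambda> h D - {(x, x \<notin> D)}) = hole_config \<Lambda> x (move_spin x h D)"
  using assms unfolding move_spin_def by (auto simp: mem_hole_config)

lemma bij_betw_move_spin:
  assumes "x \<in> \<Lambda>" "h \<in> \<Lambda>" "x \<noteq> h"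
  shows "bij_betw (move_spin x h) (Pow (\<Lambda> - {h})) (Pow (\<Lambda> - {x}))"
proof (rule bij_betw_byWitness[where f' = "move_spin h x"])
  show "\<forall>D\<in>Pow (\<Lambda> - {h}). move_spin h x (move_spin x h D) = D"
    and "\<forall>D\<in>Pow (\<Lambda> - {x}). move_spin x h (move_spin h x D) = D"
    and "move_spin x h ` Pow (\<Lambda> - {h}) \<subseteq> Pow (\<Lambda> - {x})"
    and "move_spin h x ` Pow (\<Lambda> - {x}) \<subseteq> Pow (\<Lambda> - {h})"
    using assms unfolding move_spin_def by auto
qed

lemma norm_hop_sign: "norm (hop_sign \<Lambda> x h D) = 1"
  unfolding hop_sign_def by (simp add: norm_mult norm_fsign)

lemma no_double_eq_hole_config:
  assumes nd: "no_double S" and sites: "fst ` S = \<Lambda> - {h}"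
  shows "S = hole_config \<Lambda> h {y. (y, False) \<in> S}"
proof (rule set_eqI)
  fix p :: "'a mode"
  obtain z \<sigma> where p: "p = (z, \<sigma>)" by (cases p)
  have "(z, True) \<in> S \<longleftrightarrow> z \<in> fst ` S \<and> (z, False) \<notin> S"
  proof
    assume "(z, True) \<in> S"
    then show "z \<in> fst ` S \<and> (z, False) \<notin> S" using nd unfolding no_double_def by force
  next
    assume "z \<in> fst ` S \<and> (z, False) \<notin> S"
    then obtain b where "(z, b) \<in> S" "(z, False) \<notin> S" by force
    then show "(z, True) \<in> S" by (cases b) auto
  qed
  moreover have "(z, False) \<in> S \<Longrightarrow> z \<in> fst ` S" by force
  ultimately show "p \<in> S \<longleftrightarrow> p \<in> hole_config \<Lambda> h {y. (y, False) \<in> S}"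
    unfolding p mem_hole_config using sites by (cases \<sigma>) auto
qed

lemma P0HNe_support_hole_config:
  assumes fin: "finite \<Lambda>" and "\<Lambda> \<noteq> {}" and "\<phi> \<in> P0HNe \<Lambda> (card \<Lambda> - 1)" and "\<phi> S \<noteq> 0"
  obtains h D where "h \<in> \<Lambda>" "D \<subseteq> \<Lambda> - {h}" "S = hole_config \<Lambda> h D"
proof -
  obtain \<psi> where \<psi>: "\<psi> \<in> HNe \<Lambda> (card \<Lambda> - 1)" "\<phi> = P0 \<psi>"
    using assms(3) unfolding P0HNe_def by blast
  have nd: "no_double S" and "\<psi> S \<noteq> 0" using assms(4) \<psi>(2) by (auto simp: P0_def split: if_splits)
  then have "S \<subseteq> \<Lambda> \<times> UNIV" and "card S = card \<Lambda> - 1"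
    using \<psi>(1) unfolding HNe_def by auto
  then have sub: "fst ` S \<subseteq> \<Lambda>" by auto
  have "inj_on fst S"
  proof (rule inj_onI)
    fix p q assume "p \<in> S" "q \<in> S" "fst p = fst q"
    then show "p = q" using nd unfolding no_double_def by (cases p; cases q; cases "snd p"; cases "snd q") auto
  qed
  then have "card (fst ` S) = card \<Lambda> - 1" using \<open>card S = _\<close> by (simp add: card_image)
  moreover have "card \<Lambda> \<ge> 1" using fin assms(2) by (simp add: Suc_leI card_gt_0_iff)
  ultimately have "card (\<Lambda> - fst ` S) = 1"
    using fin sub card_Diff_subset[of "fst ` S" \<Lambda>] finite_subset[of "fst ` S" \<Lambda>] by simp
  then obtain h where "\<Lambda> - fst ` S = {h}" by (rule card_1_singletonE)
  then have h: "h \<in> \<Lambda>" and sites: "fst ` S = \<Lambda> - {h}" using sub by auto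
  have "{y. (y, False) \<in> S} \<subseteq> \<Lambda> - {h}" using sites by force
  then show thesis using that h no_double_eq_hole_config[OF nd sites] by blast
qed

lemma hop_term_hole_config:
  fixes \<phi> :: "'a::linorder fstate"
  assumes x: "x \<in> \<Lambda>" and "y \<in> \<Lambda>" and h: "h \<in> \<Lambda>" and D: "D \<subseteq> \<Lambda> - {h}"
  shows "cdag (x, \<sigma>) (cop (y, \<sigma>) (P0 \<phi>)) (hole_config \<Lambda> h D) =
    (if \<sigma> = (x \<notin> D) \<and> x \<noteq> h then
       (if y = x then \<phi> (hole_config \<Lambda> h D) else 0)
       + (if y = h then hop_sign \<Lambda> x h D * \<phi> (hole_config \<Lambda> x (move_spin x h D)) else 0)
     else 0)"
proof (cases "(x, \<sigma>) \<in> hole_config \<Lambda> h D")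
  case False
  then show ?thesis using assms by (auto simp: cdag_cop mem_hole_config)
next
  case xS: True
  then have xh: "x \<noteq> h" and \<sigma>: "\<sigma> = (x \<notin> D)" by (auto simp: mem_hole_config)
  consider "y = x" | "y = h" | "y \<noteq> x" "y \<noteq> h" "\<sigma> = (y \<notin> D)" | "y \<noteq> x" "y \<noteq> h" "\<sigma> \<noteq> (y \<notin> D)"
    by blast
  then show ?thesis
  proof cases
    case 1
    then show ?thesis using xh \<sigma> xS by (simp add: cdag_cop_self P0_hole_config)
  next
    case 2
    have "(h, \<sigma>) \<notin> hole_config \<Lambda> h D - {(x, \<sigma>)}" by (simp add: mem_hole_config)
    then show ?thesis using 2 xh \<sigma> xS hop_hole_config[OF x xh h D]
      by (simp add: cdag_cop P0_hole_config hop_sign_def)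
  next
    case 3
    \<comment> \<open>the target mode is already occupied\<close>
    then have "(y, \<sigma>) \<in> hole_config \<Lambda> h D - {(x, \<sigma>)}" using assms by (auto simp: mem_hole_config)
    then show ?thesis using 3 by (simp add: cdag_cop)
  next
    case 4
    \<comment> \<open>the hop would create a doubly occupied site at \<open>y\<close>\<close>
    have "\<not> no_double (insert (y, \<sigma>) (hole_config \<Lambda> h D - {(x, \<sigma>)}))"
      unfolding no_double_def using 4 assms by (cases \<sigma>) (auto simp: mem_hole_config)
    then have "P0 \<phi> (insert (y, \<sigma>) (hole_config \<Lambda> h D - {(x, \<sigma>)})) = 0" by (simp add: P0_def)
    then have "cdag (x, \<sigma>) (cop (y, \<sigma>) (P0 \<phi>)) (hole_config \<Lambda> h D) = 0" unfolding cdag_cop by simp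
    then show ?thesis using 4 by simp
  qed
qed

lemma Hinf_hole_config:
  fixes \<phi> :: "'a::linorder fstate"
  assumes fin: "finite \<Lambda>" and h: "h \<in> \<Lambda>" and D: "D \<subseteq> \<Lambda> - {h}"
  shows "Hinf \<Lambda> t \<phi> (hole_config \<Lambda> h D) =
      (\<Sum>x\<in>\<Lambda>-{h}. complex_of_real (t x x)) * \<phi> (hole_config \<Lambda> h D)
    + (\<Sum>x\<in>\<Lambda>-{h}. complex_of_real (t x h) * hop_sign \<Lambda> x h D * \<phi> (hole_config \<Lambda> x (move_spin x h D)))"
proof -
  define S where "S = hole_config \<Lambda> h D"
  define T where "T x = complex_of_real (t x x) * \<phi> S
      + complex_of_real (t x h) * hop_sign \<Lambda> x h D * \<phi> (hole_config \<Lambda> x (move_spin x h D))" for x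
  have row: "(\<Sum>y\<in>\<Lambda>. \<Sum>\<sigma>\<in>UNIV. complex_of_real (t x y) * cdag (x, \<sigma>) (cop (y, \<sigma>) (P0 \<phi>)) S)
      = (if x \<noteq> h then T x else 0)" if x: "x \<in> \<Lambda>" for x
  proof -
    have "(\<Sum>y\<in>\<Lambda>. \<Sum>\<sigma>\<in>UNIV. complex_of_real (t x y) * cdag (x, \<sigma>) (cop (y, \<sigma>) (P0 \<phi>)) S)
      = (\<Sum>y\<in>\<Lambda>. (if y = x \<and> x \<noteq> h then complex_of_real (t x x) * \<phi> S else 0)
          + (if y = h \<and> x \<noteq> h then complex_of_real (t x h) * (hop_sign \<Lambda> x h D
              * \<phi> (hole_config \<Lambda> x (move_spin x h D))) else 0))"
      unfolding S_def by (intro sum.cong refl) (auto simp: sum_UNIV_bool hop_term_hole_config x h D)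
    also have "\<dots> = (if x \<noteq> h then T x else 0)"
      using fin x h by (simp add: T_def sum.distrib mult.assoc)
    finally show ?thesis .
  qed
  have "Hinf \<Lambda> t \<phi> S = (\<Sum>x\<in>\<Lambda>. if x \<noteq> h then T x else 0)"
    unfolding Hinf_def Hhop_def S_def P0_hole_config using row by (simp add: S_def)
  also have "\<dots> = (\<Sum>x\<in>\<Lambda>-{h}. T x)"
    using fin by (simp add: sum.inter_filter[symmetric] set_diff_eq)
  finally show ?thesis unfolding S_def T_def by (simp add: sum.distrib sum_distrib_right)
qed

section \<open>The one-hole matrix bounds the spectrum from below\<close>

text \<open>The hole moves from \<open>h\<close> to \<open>y\<close> when the electron at \<open>y\<close> hops to \<open>h\<close>, whence the
  amplitude \<open>-t y h\<close>; the diagonal collects the on-site terms of the occupied sites.\<close>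
definition hole_matrix :: "'a set \<Rightarrow> ('a \<Rightarrow> 'a \<Rightarrow> real) \<Rightarrow> 'a \<Rightarrow> 'a \<Rightarrow> real" where
  "hole_matrix \<Lambda> t x y = (if x = y then (\<Sum>z\<in>\<Lambda>-{x}. t z z) else - t y x)"

lemma hole_matrix_mult:
  assumes "finite \<Lambda>" "h \<in> \<Lambda>"
  shows "(\<Sum>y\<in>\<Lambda>. hole_matrix \<Lambda> t h y * v y) = (\<Sum>z\<in>\<Lambda>-{h}. t z z) * v h - (\<Sum>y\<in>\<Lambda>-{h}. t y h * v y)"
proof -
  have "(\<Sum>y\<in>\<Lambda>. hole_matrix \<Lambda> t h y * v y) = hole_matrix \<Lambda> t h h * v h + (\<Sum>y\<in>\<Lambda>-{h}. hole_matrix \<Lambda> t h y * v y)"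
    using assms by (simp add: sum.remove)
  also have "(\<Sum>y\<in>\<Lambda>-{h}. hole_matrix \<Lambda> t h y * v y) = - (\<Sum>y\<in>\<Lambda>-{h}. t y h * v y)"
    unfolding hole_matrix_def sum_negf[symmetric] by (intro sum.cong refl) auto
  finally show ?thesis by (simp add: hole_matrix_def)
qed

definition hole_weight :: "'a::linorder set \<Rightarrow> 'a fstate \<Rightarrow> 'a \<Rightarrow> real" where
  "hole_weight \<Lambda> \<phi> h = (\<Sum>D\<in>Pow (\<Lambda> - {h}). cmod (\<phi> (hole_config \<Lambda> h D)))"

text \<open>The hopping amplitudes are nonnegative, so taking moduli in the eigenvalue equation
  only loses the triangle inequality.\<close>
lemma eigenvector_hole_config_bound:
  assumes fin: "finite \<Lambda>" and tnn: "\<forall>x\<in>\<Lambda>. \<forall>y\<in>\<Lambda>. 0 \<le> t x y"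
    and eig: "Hinf \<Lambda> t \<phi> = (\<lambda>S. E * \<phi> S)" and h: "h \<in> \<Lambda>" and D: "D \<subseteq> \<Lambda> - {h}"
  shows "(\<Sum>z\<in>\<Lambda>-{h}. t z z) * cmod (\<phi> (hole_config \<Lambda> h D))
      - (\<Sum>x\<in>\<Lambda>-{h}. t x h * cmod (\<phi> (hole_config \<Lambda> x (move_spin x h D))))
    \<le> Re E * cmod (\<phi> (hole_config \<Lambda> h D))"
proof -
  define d where "d = (\<Sum>z\<in>\<Lambda>-{h}. t z z)"
  define a where "a = \<phi> (hole_config \<Lambda> h D)"
  define R where "R = (\<Sum>x\<in>\<Lambda>-{h}. complex_of_real (t x h) * hop_sign \<Lambda> x h D
      * \<phi> (hole_config \<Lambda> x (move_spin x h D)))"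
  have "E * a = complex_of_real d * a + R"
    using Hinf_hole_config[OF fin h D, of t \<phi>] eig unfolding a_def R_def d_def of_real_sum by simp
  then have "(E - complex_of_real d) * a = R" by (simp add: algebra_simps)
  then have "cmod R = cmod (E - complex_of_real d) * cmod a" by (metis norm_mult)
  moreover have "- cmod (E - complex_of_real d) \<le> Re E - d"
    using abs_Re_le_cmod[of "E - complex_of_real d"] by simp
  ultimately have "- cmod R \<le> (Re E - d) * cmod a"
    using mult_right_mono[of "- cmod (E - complex_of_real d)" "Re E - d" "cmod a"] by simp
  moreover have "cmod R \<le> (\<Sum>x\<in>\<Lambda>-{h}. t x h * cmod (\<phi> (hole_config \<Lambda> x (move_spin x h D))))"
  proof -
    have "cmod R \<le> (\<Sum>x\<in>\<Lambda>-{h}. cmod (complex_of_real (t x h) * hop_sign \<Lambda> x h D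
        * \<phi> (hole_config \<Lambda> x (move_spin x h D))))"
      unfolding R_def by (rule norm_sum)
    also have "\<dots> = (\<Sum>x\<in>\<Lambda>-{h}. t x h * cmod (\<phi> (hole_config \<Lambda> x (move_spin x h D))))"
      using tnn h by (intro sum.cong refl) (simp add: norm_mult norm_hop_sign)
    finally show ?thesis .
  qed
  ultimately show ?thesis unfolding a_def d_def by (simp add: algebra_simps)
qed

lemma hole_weight_subeigenvector:
  assumes fin: "finite \<Lambda>" and tnn: "\<forall>x\<in>\<Lambda>. \<forall>y\<in>\<Lambda>. 0 \<le> t x y"
    and eig: "Hinf \<Lambda> t \<phi> = (\<lambda>S. E * \<phi> S)" and h: "h \<in> \<Lambda>"
  shows "(\<Sum>y\<in>\<Lambda>. hole_matrix \<Lambda> t h y * hole_weight \<Lambda> \<phi> y) \<le> Re E * hole_weight \<Lambda> \<phi> h"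
proof -
  define c where "c x D = cmod (\<phi> (hole_config \<Lambda> x D))" for x D
  \<comment> \<open>Summing over \<open>D\<close>, the spin configurations reached by a hop exhaust those of the new hole.\<close>
  have moved: "(\<Sum>D\<in>Pow (\<Lambda>-{h}). c x (move_spin x h D)) = hole_weight \<Lambda> \<phi> x" if x: "x \<in> \<Lambda>-{h}" for x
    using sum.reindex_bij_betw[OF bij_betw_move_spin[of x \<Lambda> h], of "c x"] x h
    by (simp add: c_def hole_weight_def)
  have "(\<Sum>D\<in>Pow (\<Lambda>-{h}). (\<Sum>z\<in>\<Lambda>-{h}. t z z) * c h D - (\<Sum>x\<in>\<Lambda>-{h}. t x h * c x (move_spin x h D)))
      \<le> (\<Sum>D\<in>Pow (\<Lambda>-{h}). Re E * c h D)"
    unfolding c_def using eigenvector_hole_config_bound[OF fin tnn eig h] by (intro sum_mono) auto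
  moreover have "(\<Sum>D\<in>Pow (\<Lambda>-{h}). \<Sum>x\<in>\<Lambda>-{h}. t x h * c x (move_spin x h D))
      = (\<Sum>x\<in>\<Lambda>-{h}. t x h * hole_weight \<Lambda> \<phi> x)"
    by (subst sum.swap) (simp add: moved flip: sum_distrib_left)
  ultimately show ?thesis
    using hole_matrix_mult[OF fin h]
    by (simp add: sum_subtractf hole_weight_def c_def flip: sum_distrib_left)
qed

lemma hole_weight_nonzero:
  assumes fin: "finite \<Lambda>" and ne: "\<Lambda> \<noteq> {}"
    and P: "\<phi> \<in> P0HNe \<Lambda> (card \<Lambda> - 1)" and nz: "\<phi> \<noteq> (\<lambda>_. 0)"
  shows "0 < (\<Sum>h\<in>\<Lambda>. (hole_weight \<Lambda> \<phi> h)\<^sup>2)"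
proof -
  obtain S where S: "\<phi> S \<noteq> 0" using nz by auto
  obtain h D where h: "h \<in> \<Lambda>" and D: "D \<subseteq> \<Lambda> - {h}" and S_eq: "S = hole_config \<Lambda> h D"
    using P0HNe_support_hole_config[OF fin ne P S] .
  have "cmod (\<phi> S) \<le> hole_weight \<Lambda> \<phi> h"
    unfolding hole_weight_def S_eq using fin D by (intro member_le_sum) auto
  moreover have "0 < cmod (\<phi> S)" using S by simp
  ultimately have "0 < hole_weight \<Lambda> \<phi> h" by linarith
  then have "0 < (hole_weight \<Lambda> \<phi> h)\<^sup>2" by simp
  also have "\<dots> \<le> (\<Sum>h\<in>\<Lambda>. (hole_weight \<Lambda> \<phi> h)\<^sup>2)"
    using fin h by (intro member_le_sum) auto
  finally show ?thesis .
qed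

lemma Hinf_eigenvalue_lower_bound:
  assumes fin: "finite \<Lambda>" and ne: "\<Lambda> \<noteq> {}" and tnn: "\<forall>x\<in>\<Lambda>. \<forall>y\<in>\<Lambda>. 0 \<le> t x y"
    and P: "\<phi> \<in> P0HNe \<Lambda> (card \<Lambda> - 1)" and nz: "\<phi> \<noteq> (\<lambda>_. 0)"
    and eig: "Hinf \<Lambda> t \<phi> = (\<lambda>S. E * \<phi> S)"
    and min: "\<And>f. \<mu> * (\<Sum>x\<in>\<Lambda>. (f x)\<^sup>2) \<le> quadratic_form \<Lambda> (hole_matrix \<Lambda> t) f"
  shows "\<mu> \<le> Re E"
proof -
  define f where "f = hole_weight \<Lambda> \<phi>"
  have "\<mu> * (\<Sum>h\<in>\<Lambda>. (f h)\<^sup>2) \<le> quadratic_form \<Lambda> (hole_matrix \<Lambda> t) f" by (rule min)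
  also have "\<dots> \<le> (\<Sum>h\<in>\<Lambda>. f h * (Re E * f h))"
    unfolding quadratic_form_def f_def
    using hole_weight_subeigenvector[OF fin tnn eig]
    by (intro sum_mono mult_left_mono) (auto simp: hole_weight_def sum_nonneg)
  also have "\<dots> = Re E * (\<Sum>h\<in>\<Lambda>. (f h)\<^sup>2)"
    by (simp add: sum_distrib_left power2_eq_square mult.left_commute)
  finally show ?thesis
    using hole_weight_nonzero[OF fin ne P nz] unfolding f_def by simp
qed

section \<open>Fully polarized eigenstates\<close>

definition hole_sign :: "'a::linorder set \<Rightarrow> 'a \<Rightarrow> real" where
  "hole_sign \<Lambda> h = (-1) ^ card {y \<in> \<Lambda>. y < h}"

lemma hole_sign_mult_self: "hole_sign \<Lambda> h * hole_sign \<Lambda> h = 1"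
  unfolding hole_sign_def by (simp flip: power_add)

lemma card_less_spin_up:
  "card {m \<in> (\<lambda>y. (y, True)) ` A. m < (x, True)} = card {y \<in> A. y < x}"
proof -
  have "{m \<in> (\<lambda>y. (y, True)) ` A. m < (x, True)} = (\<lambda>y. (y, True)) ` {y \<in> A. y < x}" by auto
  moreover have "inj_on (\<lambda>y. (y, True)) {y \<in> A. y < x}" by (auto simp: inj_on_def)
  ultimately show ?thesis by (simp add: card_image)
qed

lemma hop_sign_polarized:
  assumes fin: "finite \<Lambda>" and x: "x \<in> \<Lambda>" and h: "h \<in> \<Lambda>" and xh: "x \<noteq> h"
  shows "hop_sign \<Lambda> x h {} = - complex_of_real (hole_sign \<Lambda> h * hole_sign \<Lambda> x)"
proof -
  have "hole_config \<Lambda> h {} = (\<lambda>y. (y, True)) ` (\<Lambda> - {h})"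
    and "hole_config \<Lambda> h {} - {(x, True)} = (\<lambda>y. (y, True)) ` (\<Lambda> - {h, x})"
    unfolding hole_config_def by auto
  then have sign: "hop_sign \<Lambda> x h {} =
      (-1) ^ card {y \<in> \<Lambda> - {h}. y < x} * (-1) ^ card {y \<in> \<Lambda> - {h, x}. y < h}"
    unfolding hop_sign_def fsign_def by (simp add: card_less_spin_up)
  \<comment> \<open>exactly one of the two counts differs by one from the count in \<open>hole_sign\<close>\<close>
  have fin_less: "finite {y \<in> \<Lambda>. y < z}" for z using fin by simp
  show ?thesis
  proof (cases "h < x")
    case True
    have "{y \<in> \<Lambda> - {h}. y < x} = {y \<in> \<Lambda>. y < x} - {h}" "{y \<in> \<Lambda> - {h, x}. y < h} = {y \<in> \<Lambda>. y < h}"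
      using True by auto
    moreover have "card {y \<in> \<Lambda>. y < x} = Suc (card ({y \<in> \<Lambda>. y < x} - {h}))"
      using card_Suc_Diff1[OF fin_less, of h x] True h by simp
    ultimately show ?thesis unfolding sign hole_sign_def by simp
  next
    case False
    then have "x < h" using xh by auto
    then have "{y \<in> \<Lambda> - {h}. y < x} = {y \<in> \<Lambda>. y < x}" "{y \<in> \<Lambda> - {h, x}. y < h} = {y \<in> \<Lambda>. y < h} - {x}"
      by auto
    moreover have "card {y \<in> \<Lambda>. y < h} = Suc (card ({y \<in> \<Lambda>. y < h} - {x}))"
      using card_Suc_Diff1[OF fin_less, of x h] \<open>x < h\<close> x by simp
    ultimately show ?thesis unfolding sign hole_sign_def by simp
  qed
qed

text \<open>All spins up, with hole amplitudes \<open>v\<close>; the factor \<open>hole_sign\<close> compensates the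
  fermionic sign of every hop (\<open>hop_sign_polarized\<close>).\<close>
definition polarized_state :: "'a::linorder set \<Rightarrow> ('a \<Rightarrow> real) \<Rightarrow> 'a fstate" where
  "polarized_state \<Lambda> v S =
     (\<Sum>h\<in>\<Lambda>. if S = hole_config \<Lambda> h {} then complex_of_real (hole_sign \<Lambda> h * v h) else 0)"

lemma polarized_state_hole_config:
  assumes fin: "finite \<Lambda>" and h: "h \<in> \<Lambda>" and D: "D \<subseteq> \<Lambda> - {h}"
  shows "polarized_state \<Lambda> v (hole_config \<Lambda> h D) =
    (if D = {} then complex_of_real (hole_sign \<Lambda> h * v h) else 0)"
proof -
  have "polarized_state \<Lambda> v (hole_config \<Lambda> h D) = (\<Sum>h'\<in>\<Lambda>.
      if h' = h then (if D = {} then complex_of_real (hole_sign \<Lambda> h * v h) else 0) else 0)"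
    unfolding polarized_state_def
    by (intro sum.cong refl) (use hole_config_inj[OF h D, of "{}"] in auto)
  then show ?thesis using fin h by simp
qed

lemma polarized_state_support:
  assumes "polarized_state \<Lambda> v S \<noteq> 0"
  shows "\<exists>h\<in>\<Lambda>. S = hole_config \<Lambda> h {}"
proof (rule ccontr)
  assume "\<not> ?thesis"
  then have "polarized_state \<Lambda> v S = 0" unfolding polarized_state_def by (intro sum.neutral) auto
  then show False using assms by simp
qed

lemma hop_term_polarized_state_outside:
  assumes x: "x \<in> \<Lambda>" and S: "\<not> (\<exists>h\<in>\<Lambda>. \<exists>D. D \<subseteq> \<Lambda> - {h} \<and> S = hole_config \<Lambda> h D)"
  shows "cdag (x, \<sigma>) (cop (y, \<sigma>) (P0 (polarized_state \<Lambda> v))) S = 0"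
proof (rule ccontr)
  assume nz: "cdag (x, \<sigma>) (cop (y, \<sigma>) (P0 (polarized_state \<Lambda> v))) S \<noteq> 0"
  define A where "A = insert (y, \<sigma>) (S - {(x, \<sigma>)})"
  have xS: "(x, \<sigma>) \<in> S" and yS: "(y, \<sigma>) \<notin> S - {(x, \<sigma>)}" and "P0 (polarized_state \<Lambda> v) A \<noteq> 0"
    using nz unfolding cdag_cop A_def by (auto split: if_splits)
  then have "polarized_state \<Lambda> v A \<noteq> 0" by (auto simp: P0_def split: if_splits)
  then obtain h where h: "h \<in> \<Lambda>" and A: "A = hole_config \<Lambda> h {}" using polarized_state_support by blast
  have "(y, \<sigma>) \<in> A" unfolding A_def by simp
  then have y: "y \<in> \<Lambda>" "y \<noteq> h" "\<sigma> = True" using A by (auto simp: mem_hole_config)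
  have S_eq: "S = insert (x, \<sigma>) (A - {(y, \<sigma>)})" unfolding A_def using xS yS by auto
  consider "x = y" | "x \<noteq> y" "x = h" | "x \<noteq> y" "x \<noteq> h" by blast
  then show False
  proof cases
    case 1
    then have "S = A" using S_eq \<open>(y, \<sigma>) \<in> A\<close> by auto
    then show False using S h A by blast
  next
    case 2
    have "S = hole_config \<Lambda> y (move_spin y h {})"
      using S_eq A 2 y hop_hole_config[of y \<Lambda> h "{}"] h by simp
    then show False using S y by (auto simp: move_spin_def)
  next
    case 3
    then have "(x, \<sigma>) \<in> A - {(y, \<sigma>)}" using A x y by (simp add: mem_hole_config)
    moreover have "A - {(y, \<sigma>)} = S - {(x, \<sigma>)}" unfolding A_def using yS by auto
    ultimately show False by simp
  qed
qed

lemma hop_term_polarized_state: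
  assumes fin: "finite \<Lambda>" and x: "x \<in> \<Lambda> - {h}" and h: "h \<in> \<Lambda>"
  shows "complex_of_real (t x h) * hop_sign \<Lambda> x h {}
      * polarized_state \<Lambda> v (hole_config \<Lambda> x (move_spin x h {}))
    = complex_of_real (- hole_sign \<Lambda> h * (t x h * v x))"
proof -
  have ps: "polarized_state \<Lambda> v (hole_config \<Lambda> x (move_spin x h {})) = complex_of_real (hole_sign \<Lambda> x * v x)"
    using polarized_state_hole_config[OF fin, of x "{}"] x by (simp add: move_spin_def)
  have sg: "hop_sign \<Lambda> x h {} = - complex_of_real (hole_sign \<Lambda> h * hole_sign \<Lambda> x)"
    using hop_sign_polarized[OF fin _ h] x by auto
  have "t x h * (hole_sign \<Lambda> h * hole_sign \<Lambda> x) * (hole_sign \<Lambda> x * v x)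
      = hole_sign \<Lambda> h * (t x h * v x) * (hole_sign \<Lambda> x * hole_sign \<Lambda> x)"
    by (simp add: algebra_simps)
  then have "t x h * (hole_sign \<Lambda> h * hole_sign \<Lambda> x) * (hole_sign \<Lambda> x * v x) = hole_sign \<Lambda> h * (t x h * v x)"
    by (simp add: hole_sign_mult_self)
  then show ?thesis unfolding ps sg by (metis mult_minus_left mult_minus_right of_real_minus of_real_mult)
qed

lemma Hinf_polarized_state_hole_config:
  assumes fin: "finite \<Lambda>" and h: "h \<in> \<Lambda>" and D: "D \<subseteq> \<Lambda> - {h}"
  shows "Hinf \<Lambda> t (polarized_state \<Lambda> v) (hole_config \<Lambda> h D)
    = polarized_state \<Lambda> (\<lambda>h. \<Sum>y\<in>\<Lambda>. hole_matrix \<Lambda> t h y * v y) (hole_config \<Lambda> h D)"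
    (is "_ = polarized_state \<Lambda> ?w _")
proof (cases "D = {}")
  case True
  define d where "d = (\<Sum>z\<in>\<Lambda>-{h}. t z z)"
  have "(\<Sum>x\<in>\<Lambda>-{h}. complex_of_real (t x h) * hop_sign \<Lambda> x h {}
        * polarized_state \<Lambda> v (hole_config \<Lambda> x (move_spin x h {})))
      = (\<Sum>x\<in>\<Lambda>-{h}. complex_of_real (- hole_sign \<Lambda> h * (t x h * v x)))"
    using hop_term_polarized_state[OF fin _ h] by (intro sum.cong refl) auto
  also have "\<dots> = complex_of_real (- hole_sign \<Lambda> h * (\<Sum>x\<in>\<Lambda>-{h}. t x h * v x))"
    by (simp only: of_real_sum[symmetric] sum_distrib_left)
  finally have "Hinf \<Lambda> t (polarized_state \<Lambda> v) (hole_config \<Lambda> h D)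
      = complex_of_real d * complex_of_real (hole_sign \<Lambda> h * v h)
        + complex_of_real (- hole_sign \<Lambda> h * (\<Sum>x\<in>\<Lambda>-{h}. t x h * v x))"
    using Hinf_hole_config[OF fin h D, of t] polarized_state_hole_config[OF fin h D, of v] True
    unfolding d_def of_real_sum by simp
  also have "\<dots> = complex_of_real (hole_sign \<Lambda> h * (d * v h - (\<Sum>x\<in>\<Lambda>-{h}. t x h * v x)))"
    by (simp add: algebra_simps)
  also have "\<dots> = polarized_state \<Lambda> ?w (hole_config \<Lambda> h D)"
    using polarized_state_hole_config[OF fin h D, of ?w] True
    unfolding d_def hole_matrix_mult[OF fin h] by simp
  finally show ?thesis .
next
  case False
  \<comment> \<open>hops preserve the number of down spins, so both sides vanish\<close>
  have "move_spin x h D \<noteq> {}" "move_spin x h D \<subseteq> \<Lambda> - {x}" if "x \<in> \<Lambda> - {h}" for x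
    using False D that h unfolding move_spin_def by auto
  then have "polarized_state \<Lambda> v (hole_config \<Lambda> x (move_spin x h D)) = 0" if "x \<in> \<Lambda> - {h}" for x
    using polarized_state_hole_config[OF fin, of x "move_spin x h D" v] that by simp
  then show ?thesis
    using Hinf_hole_config[OF fin h D, of t] polarized_state_hole_config[OF fin h D] False by simp
qed

lemma Hinf_polarized_state_outside:
  assumes "\<not> (\<exists>h\<in>\<Lambda>. \<exists>D. D \<subseteq> \<Lambda> - {h} \<and> S = hole_config \<Lambda> h D)"
  shows "Hinf \<Lambda> t (polarized_state \<Lambda> v) S = 0"
proof -
  have "Hhop \<Lambda> t (P0 (polarized_state \<Lambda> v)) S = 0"
    unfolding Hhop_def using hop_term_polarized_state_outside[OF _ assms] by (intro sum.neutral ballI) simp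
  then show ?thesis unfolding Hinf_def P0_def by simp
qed

lemma Hinf_polarized_state:
  assumes fin: "finite \<Lambda>"
  shows "Hinf \<Lambda> t (polarized_state \<Lambda> v) = polarized_state \<Lambda> (\<lambda>h. \<Sum>y\<in>\<Lambda>. hole_matrix \<Lambda> t h y * v y)"
    (is "_ = polarized_state \<Lambda> ?w")
proof
  fix S
  show "Hinf \<Lambda> t (polarized_state \<Lambda> v) S = polarized_state \<Lambda> ?w S"
  proof (cases "\<exists>h\<in>\<Lambda>. \<exists>D. D \<subseteq> \<Lambda> - {h} \<and> S = hole_config \<Lambda> h D")
    case True
    then show ?thesis using Hinf_polarized_state_hole_config[OF fin] by blast
  next
    case False
    then have "polarized_state \<Lambda> ?w S = 0" using polarized_state_support[of \<Lambda> ?w S] by blast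
    then show ?thesis using Hinf_polarized_state_outside[OF False] by simp
  qed
qed

lemma polarized_state_eigenvector:
  assumes "finite \<Lambda>" and "\<And>h. h \<in> \<Lambda> \<Longrightarrow> (\<Sum>y\<in>\<Lambda>. hole_matrix \<Lambda> t h y * v y) = \<mu> * v h"
  shows "Hinf \<Lambda> t (polarized_state \<Lambda> v) = (\<lambda>S. complex_of_real \<mu> * polarized_state \<Lambda> v S)"
proof -
  have "polarized_state \<Lambda> (\<lambda>h. \<Sum>y\<in>\<Lambda>. hole_matrix \<Lambda> t h y * v y) = polarized_state \<Lambda> (\<lambda>h. \<mu> * v h)"
    unfolding polarized_state_def using assms(2) by (intro ext sum.cong) auto
  also have "\<dots> = (\<lambda>S. complex_of_real \<mu> * polarized_state \<Lambda> v S)"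
    unfolding polarized_state_def by (auto simp: sum_distrib_left intro!: sum.cong)
  finally show ?thesis using Hinf_polarized_state[OF assms(1)] by simp
qed

lemma polarized_state_in_P0HNe:
  assumes fin: "finite \<Lambda>"
  shows "polarized_state \<Lambda> v \<in> P0HNe \<Lambda> (card \<Lambda> - 1)"
proof -
  have "polarized_state \<Lambda> v \<in> HNe \<Lambda> (card \<Lambda> - 1)"
    unfolding HNe_def
  proof (intro CollectI allI impI)
    fix S assume "polarized_state \<Lambda> v S \<noteq> 0"
    then obtain h where h: "h \<in> \<Lambda>" and S: "S = hole_config \<Lambda> h {}"
      using polarized_state_support by blast
    have "S \<subseteq> \<Lambda> \<times> UNIV" "finite S" using fin unfolding S hole_config_def by auto
    moreover have "card S = card \<Lambda> - 1" unfolding S using card_hole_config[OF fin h] .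
    ultimately show "S \<subseteq> \<Lambda> \<times> UNIV \<and> finite S \<and> card S = card \<Lambda> - 1" by blast
  qed
  moreover have "P0 (polarized_state \<Lambda> v) = polarized_state \<Lambda> v"
    using polarized_state_support[of \<Lambda> v] unfolding P0_def
    by (intro ext) (metis no_double_hole_config)
  ultimately show ?thesis unfolding P0HNe_def by (metis image_eqI)
qed

lemma polarized_state_nonzero:
  assumes "finite \<Lambda>" and "h \<in> \<Lambda>" and "v h \<noteq> 0"
  shows "polarized_state \<Lambda> v \<noteq> (\<lambda>_. 0)"
proof
  assume "polarized_state \<Lambda> v = (\<lambda>_. 0)"
  then have "hole_sign \<Lambda> h * v h = 0"
    using polarized_state_hole_config[OF assms(1,2), of "{}" v] by simp
  moreover have "hole_sign \<Lambda> h \<noteq> 0" using hole_sign_mult_self[of \<Lambda> h] by auto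
  ultimately show False using assms(3) by simp
qed

lemma polarized_state_ground_state:
  assumes fin: "finite \<Lambda>" and ne: "\<Lambda> \<noteq> {}" and tnn: "\<forall>x\<in>\<Lambda>. \<forall>y\<in>\<Lambda>. 0 \<le> t x y"
    and v: "\<exists>h\<in>\<Lambda>. v h \<noteq> 0"
    and eig: "\<And>h. h \<in> \<Lambda> \<Longrightarrow> (\<Sum>y\<in>\<Lambda>. hole_matrix \<Lambda> t h y * v y) = \<mu> * v h"
    and min: "\<And>f. \<mu> * (\<Sum>x\<in>\<Lambda>. (f x)\<^sup>2) \<le> quadratic_form \<Lambda> (hole_matrix \<Lambda> t) f"
  shows "ground_state \<Lambda> t (card \<Lambda> - 1) (polarized_state \<Lambda> v)"
  unfolding ground_state_def
proof (intro conjI exI[of _ \<mu>] ballI allI impI)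
  show "polarized_state \<Lambda> v \<in> P0HNe \<Lambda> (card \<Lambda> - 1)" by (rule polarized_state_in_P0HNe[OF fin])
  show "polarized_state \<Lambda> v \<noteq> (\<lambda>_. 0)" using v polarized_state_nonzero[OF fin] by blast
  show "Hinf \<Lambda> t (polarized_state \<Lambda> v) = (\<lambda>S. complex_of_real \<mu> * polarized_state \<Lambda> v S)"
    by (rule polarized_state_eigenvector[OF fin eig])
  fix \<phi> E assume "\<phi> \<in> P0HNe \<Lambda> (card \<Lambda> - 1)" "\<phi> \<noteq> (\<lambda>_. 0)" "Hinf \<Lambda> t \<phi> = (\<lambda>S. E * \<phi> S)"
  then show "\<mu> \<le> Re E" using Hinf_eigenvalue_lower_bound[OF fin ne tnn] min by blast
qed

section \<open>Total spin of polarized states\<close>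

definition spin_raise :: "'a::linorder set \<Rightarrow> 'a fstate \<Rightarrow> 'a fstate" where
  "spin_raise \<Lambda> g S = (\<Sum>x\<in>\<Lambda>. cdag (x, True) (cop (x, False) g) S)"

definition spin_lower :: "'a::linorder set \<Rightarrow> 'a fstate \<Rightarrow> 'a fstate" where
  "spin_lower \<Lambda> g S = (\<Sum>x\<in>\<Lambda>. cdag (x, False) (cop (x, True) g) S)"

lemma Stot_1_eq: "Stot \<Lambda> 1 g S = 1/2 * (spin_raise \<Lambda> g S + spin_lower \<Lambda> g S)"
  unfolding Stot_def spin_raise_def spin_lower_def by (simp add: sum_UNIV_bool pauli_def sum.distrib)

lemma Stot_2_eq: "Stot \<Lambda> 2 g S = 1/2 * (- \<i> * spin_raise \<Lambda> g S + \<i> * spin_lower \<Lambda> g S)"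
proof -
  have "Stot \<Lambda> 2 g S = 1/2 * (\<Sum>x\<in>\<Lambda>. - \<i> * cdag (x, True) (cop (x, False) g) S
      + \<i> * cdag (x, False) (cop (x, True) g) S)"
    unfolding Stot_def by (intro arg_cong[where f="\<lambda>z. 1/2 * z"] sum.cong refl) (simp add: sum_UNIV_bool pauli_def)
  then show ?thesis
    unfolding spin_raise_def spin_lower_def by (simp only: sum.distrib sum_distrib_left)
qed

lemma Stot_3_eq:
  "Stot \<Lambda> 3 g S = 1/2 * (\<Sum>x\<in>\<Lambda>. (if (x, True) \<in> S then 1 else 0) - (if (x, False) \<in> S then 1 else 0)) * g S"
proof -
  have "Stot \<Lambda> 3 g S = 1/2 * (\<Sum>x\<in>\<Lambda>. ((if (x, True) \<in> S then 1 else 0) - (if (x, False) \<in> S then 1 else 0)) * g S)"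
    unfolding Stot_def
    by (intro arg_cong[where f="\<lambda>z. 1/2 * z"] sum.cong refl) (simp add: sum_UNIV_bool pauli_def cdag_cop_self)
  then show ?thesis by (simp add: sum_distrib_right)
qed

lemma Stot_scale: "Stot \<Lambda> \<alpha> (\<lambda>S. c * g S) = (\<lambda>S. c * Stot \<Lambda> \<alpha> g S)"
  unfolding Stot_def cdag_cop_scale by (simp add: sum_distrib_left mult.left_commute)

lemma spin_raise_polarized:
  assumes "\<And>S w. g S \<noteq> 0 \<Longrightarrow> (w, False) \<notin> S"
  shows "spin_raise \<Lambda> g S = 0"
proof -
  have "cdag (x, True) (cop (x, False) g) S = 0" for x
    using assms[of "insert (x, False) (S - {(x, True)})" x] unfolding cdag_cop by auto
  then show ?thesis unfolding spin_raise_def by simp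
qed

lemma cdag_cop_spin_lower_polarized:
  assumes up: "\<And>S w. g S \<noteq> 0 \<Longrightarrow> (w, False) \<notin> S" and fin: "finite \<Lambda>" and z: "z \<in> \<Lambda>"
  shows "cdag (z, True) (cop (z, False) (spin_lower \<Lambda> g)) S
    = (if (z, True) \<in> S \<and> (z, False) \<notin> S then g S else 0)"
proof (cases "(z, True) \<in> S \<and> (z, False) \<notin> S")
  case True
  define Q where "Q = insert (z, False) (S - {(z, True)})"
  have Q: "Q - {(z, False)} = S - {(z, True)}" unfolding Q_def using True by auto
  \<comment> \<open>only the spin at \<open>z\<close> can have been lowered to reach \<open>Q\<close>\<close>
  have other: "cdag (x, False) (cop (x, True) g) Q = 0" if "x \<noteq> z" for x
  proof -
    have "(z, False) \<in> insert (x, True) (Q - {(x, False)})" unfolding Q_def using that by auto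
    then show ?thesis using up unfolding cdag_cop by auto
  qed
  have same: "cdag (z, False) (cop (z, True) g) Q = fsign (z, False) (S - {(z, True)}) * fsign (z, True) S * g S"
  proof -
    have "(z, False) \<in> Q" "(z, True) \<notin> Q - {(z, False)}" "insert (z, True) (S - {(z, True)}) = S"
      using True unfolding Q_def by auto
    moreover have "fsign (z, False) Q = fsign (z, False) (S - {(z, True)})"
      unfolding Q_def by (rule fsign_insert_self)
    ultimately show ?thesis unfolding cdag_cop Q by (simp add: fsign_Diff_self)
  qed
  have "spin_lower \<Lambda> g Q = fsign (z, False) (S - {(z, True)}) * fsign (z, True) S * g S"
    unfolding spin_lower_def using other same fin z by (simp add: sum.remove)
  then have "cdag (z, True) (cop (z, False) (spin_lower \<Lambda> g)) S
      = (fsign (z, True) S * fsign (z, True) S)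
        * (fsign (z, False) (S - {(z, True)}) * fsign (z, False) (S - {(z, True)})) * g S"
    using True unfolding cdag_cop Q_def[symmetric] by (simp add: algebra_simps)
  then show ?thesis using True by (simp add: fsign_mult_self)
next
  case False
  then show ?thesis unfolding cdag_cop by auto
qed

lemma sum_indicator_eq_card:
  "finite A \<Longrightarrow> (\<Sum>x\<in>A. if P x then (1::complex) else 0) = of_nat (card {x \<in> A. P x})"
  by (simp add: sum.inter_filter[symmetric])

lemma spin_raise_spin_lower_polarized:
  assumes fin: "finite \<Lambda>"
    and up: "\<And>S w. g S \<noteq> 0 \<Longrightarrow> (w, False) \<notin> S"
    and count: "\<And>S. g S \<noteq> 0 \<Longrightarrow> card {z \<in> \<Lambda>. (z, True) \<in> S} = n"
  shows "spin_raise \<Lambda> (spin_lower \<Lambda> g) S = of_nat n * g S"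
proof -
  have "spin_raise \<Lambda> (spin_lower \<Lambda> g) S = (\<Sum>z\<in>\<Lambda>. if (z, True) \<in> S \<and> (z, False) \<notin> S then g S else 0)"
    unfolding spin_raise_def by (intro sum.cong refl cdag_cop_spin_lower_polarized[OF up fin])
  moreover have "\<dots> = of_nat n * g S"
  proof (cases "g S = 0")
    case False
    have "(\<Sum>z\<in>\<Lambda>. if (z, True) \<in> S \<and> (z, False) \<notin> S then g S else 0)
        = (\<Sum>z\<in>\<Lambda>. if (z, True) \<in> S then 1 else 0) * g S"
      unfolding sum_distrib_right using up[OF False] by (intro sum.cong refl) simp
    then show ?thesis using sum_indicator_eq_card[OF fin] count[OF False] by simp
  qed (simp cong: if_cong)
  ultimately show ?thesis by simp
qed

lemma Stot_3_polarized:
  assumes fin: "finite \<Lambda>"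
    and up: "\<And>S w. g S \<noteq> 0 \<Longrightarrow> (w, False) \<notin> S"
    and count: "\<And>S. g S \<noteq> 0 \<Longrightarrow> card {z \<in> \<Lambda>. (z, True) \<in> S} = n"
  shows "Stot \<Lambda> 3 g = (\<lambda>S. of_nat n / 2 * g S)"
proof
  fix S
  show "Stot \<Lambda> 3 g S = of_nat n / 2 * g S"
  proof (cases "g S = 0")
    case False
    then show ?thesis
      unfolding Stot_3_eq using up[OF False] sum_indicator_eq_card[OF fin] count[OF False] by simp
  qed (simp add: Stot_3_eq)
qed

text \<open>For a polarized state \<open>S\<^sup>+ g = 0\<close>, hence \<open>S\<^sup>2 g = S\<^sup>+ S\<^sup>- g / 2 + (S\<^sup>z)\<^sup>2 g\<close>, where
  \<open>S\<^sup>+ S\<^sup>-\<close> counts the up spins.\<close>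
lemma has_total_spin_polarized:
  fixes g :: "'a::linorder fstate"
  assumes fin: "finite \<Lambda>"
    and up: "\<And>S w. g S \<noteq> 0 \<Longrightarrow> (w, False) \<notin> S"
    and count: "\<And>S. g S \<noteq> 0 \<Longrightarrow> card {z \<in> \<Lambda>. (z, True) \<in> S} = n"
  shows "has_total_spin \<Lambda> (real n / 2) g"
  unfolding has_total_spin_def
proof
  fix S
  have raise_lower: "spin_raise \<Lambda> (spin_lower \<Lambda> g) S = of_nat n * g S"
    by (rule spin_raise_spin_lower_polarized[OF fin up count])
  have Stot_3: "Stot \<Lambda> 3 g = (\<lambda>S. of_nat n / 2 * g S)" by (rule Stot_3_polarized[OF fin up count])
  have Stot_1: "Stot \<Lambda> 1 g = (\<lambda>S. 1/2 * spin_lower \<Lambda> g S)"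
    using Stot_1_eq[of \<Lambda> g] spin_raise_polarized[OF up] by auto
  have Stot_2: "Stot \<Lambda> 2 g = (\<lambda>S. \<i>/2 * spin_lower \<Lambda> g S)"
    using Stot_2_eq[of \<Lambda> g] spin_raise_polarized[OF up] by auto
  have "Stot_sq \<Lambda> g S = Stot \<Lambda> 1 (Stot \<Lambda> 1 g) S + Stot \<Lambda> 2 (Stot \<Lambda> 2 g) S + Stot \<Lambda> 3 (Stot \<Lambda> 3 g) S"
    unfolding Stot_sq_def by simp
  also have "\<dots> = 1/2 * spin_raise \<Lambda> (spin_lower \<Lambda> g) S + (of_nat n / 2)\<^sup>2 * g S"
    unfolding Stot_1 Stot_2 Stot_3 Stot_scale Stot_1_eq Stot_2_eq
    by (simp add: algebra_simps power2_eq_square)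
  also have "\<dots> = complex_of_real (real n / 2 * (real n / 2 + 1)) * g S"
    unfolding raise_lower by (simp add: algebra_simps power2_eq_square)
  finally show "Stot_sq \<Lambda> g S = complex_of_real (real n / 2 * (real n / 2 + 1)) * g S" .
qed

lemma polarized_state_total_spin:
  assumes fin: "finite \<Lambda>"
  shows "has_total_spin \<Lambda> (real (card \<Lambda> - 1) / 2) (polarized_state \<Lambda> v)"
proof (rule has_total_spin_polarized[OF fin])
  fix S assume "polarized_state \<Lambda> v S \<noteq> 0"
  then obtain h where h: "h \<in> \<Lambda>" "S = hole_config \<Lambda> h {}" using polarized_state_support by blast
  then show "(w, False) \<notin> S" for w by (simp add: mem_hole_config)
  have "{z \<in> \<Lambda>. (z, True) \<in> S} = \<Lambda> - {h}" using h by (auto simp: mem_hole_config)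
  then show "card {z \<in> \<Lambda>. (z, True) \<in> S} = card \<Lambda> - 1" using h fin by simp
qed

theorem mainTheorem4:
  fixes \<Lambda> :: "'a::linorder set" and t :: "'a \<Rightarrow> 'a \<Rightarrow> real" and Ne :: nat
  assumes "finite \<Lambda>" and "card \<Lambda> \<ge> 2"
    and "\<forall>x\<in>\<Lambda>. \<forall>y\<in>\<Lambda>. t x y = t y x"
    and "\<forall>x\<in>\<Lambda>. \<forall>y\<in>\<Lambda>. t x y \<ge> 0"
    and "Ne = card \<Lambda> - 1"
  shows "\<exists>\<psi>. ground_state \<Lambda> t Ne \<psi> \<and> has_total_spin \<Lambda> (real Ne / 2) \<psi>"
proof -
  have fin: "finite \<Lambda>" and ne: "\<Lambda> \<noteq> {}" using assms(1,2) by auto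
  obtain \<mu> v where v: "\<exists>h\<in>\<Lambda>. v h \<noteq> 0"
    and eig: "\<And>h. h \<in> \<Lambda> \<Longrightarrow> (\<Sum>y\<in>\<Lambda>. hole_matrix \<Lambda> t h y * v y) = \<mu> * v h"
    and min: "\<And>f. \<mu> * (\<Sum>x\<in>\<Lambda>. (f x)\<^sup>2) \<le> quadratic_form \<Lambda> (hole_matrix \<Lambda> t) f"
  proof (rule symmetric_matrix_min_eigenvector[where M = "hole_matrix \<Lambda> t", OF fin ne])
    show "hole_matrix \<Lambda> t x y = hole_matrix \<Lambda> t y x" if "x \<in> \<Lambda>" "y \<in> \<Lambda>" for x y
      using assms(3) that by (simp add: hole_matrix_def)
  qed (rule that)
  have "ground_state \<Lambda> t Ne (polarized_state \<Lambda> v)"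
    unfolding assms(5) using polarized_state_ground_state[OF fin ne assms(4) v eig min] .
  moreover have "has_total_spin \<Lambda> (real Ne / 2) (polarized_state \<Lambda> v)"
    using polarized_state_total_spin[OF fin] assms(5) by simp
  ultimately show ?thesis by blast
qed

end
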